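(* Let $\bm{Z}=(Z_1,\ldots,Z_n)^T\in\{0,1\}^n$ with both treatment groups nonempty, and let $\bm{X}\in\mathbb{R}^{n\times p}$ be a covariate matrix whose first column is the all-ones vector, with rows $\bm{X}_1,\ldots,\bm{X}_n$. Let $\sigma^2>0$, $\rho^2\ge 0$, let $\bm{S}$ be an $n\times n$ symmetric positive semidefinite matrix with orthonormal eigenvectors $\bm{v}_1,\ldots,\bm{v}_n$ (where $v_{ki}$ denotes the $i$-th entry of $\bm{v}_k$) and corresponding eigenvalues $\lambda_1\ge\cdots\ge\lambda_n\ge 0$, and set $\bm{\Sigma}=\sigma^2\bm{I}_n+\rho^2\bm{S}$. Assume $\bm{X}^T\bm{\Sigma}^{-1}\bm{X}$ is invertible and $\bm{Z}^T\bm{\Sigma}^{-1}(\bm{I}_n-\bm{X}(\bm{X}^T\bm{\Sigma}^{-1}\bm{X})^{-1}\bm{X}^T\bm{\Sigma}^{-1})\bm{Z}\neq 0$. Consider the quadratic program $$\min_{\bm{w}\in\mathbb{R}^n}\Big\{\sigma^2\sum_{i=1}^n w_i^2+\rho^2\sum_{k=1}^n\lambda_k\Big(\sum_{i:Z_i=1}w_iv_{ki}-\sum_{i:Z_i=0}w_iv_{ki}\Big)^2\Big\}$$ subject to $\sum_{i:Z_i=1}w_i=\sum_{i:Z_i=0}w_i=1$ and $\sum_{i:Z_i=1}w_i\bm{X}_i=\sum_{i:Z_i=0}w_i\bm{X}_i$. Then the solution of this problem is $$\bm{w}=\bm{M}\,\frac{(\bm{I}_n-\bm{\Sigma}^{-1}\bm{X}(\bm{X}^T\bm{\Sigma}^{-1}\bm{X})^{-1}\bm{X}^T)\bm{\Sigma}^{-1}\bm{Z}}{\bm{Z}^T\bm{\Sigma}^{-1}(\bm{I}_n-\bm{X}(\bm{X}^T\bm{\Sigma}^{-1}\bm{X})^{-1}\bm{X}^T\bm{\Sigma}^{-1})\bm{Z}},$$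 where $\bm{M}$ is diagonal with $M_{ii}=2Z_i-1$; i.e. it is the vector of implied weights of the GLS estimator $\hat\tau_{GLS}$ of the treatment coefficient.
   Context: The GLS estimator of $\tau$ in the model $\bm{Y}=\bm{X}\bm{\beta}+\tau\bm{Z}+\bm{\epsilon}$ with error covariance $\bm{\Sigma}$ is the last coordinate of $\big(\begin{pmatrix}\bm{X} & \bm{Z}\end{pmatrix}^T\bm{\Sigma}^{-1}\begin{pmatrix}\bm{X} & \bm{Z}\end{pmatrix}\big)^{-1}\begin{pmatrix}\bm{X} & \bm{Z}\end{pmatrix}^T\bm{\Sigma}^{-1}\bm{Y}$; its implied weights are the vector $\bm{w}$ above, in the sense that $\hat\tau_{GLS}=\sum_{Z_i=1}w_iY_i-\sum_{Z_i=0}w_iY_i$. *)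

theory Defs
  imports "HOL-Analysis.Analysis"
begin

definition Sigma_mat :: "real \<Rightarrow> real \<Rightarrow> real^'n^'n \<Rightarrow> real^'n^'n" where
  "Sigma_mat s2 r2 S = s2 *\<^sub>R mat 1 + r2 *\<^sub>R S"

definition feasible_w :: "real^'n \<Rightarrow> real^'p^'n \<Rightarrow> real^'n \<Rightarrow> bool" where
  "feasible_w Z X w \<longleftrightarrow>
     (\<Sum>i | Z$i = 1. w$i) = 1 \<and> (\<Sum>i | Z$i = 0. w$i) = 1 \<and>
     (\<Sum>i | Z$i = 1. w$i *\<^sub>R X$i) = (\<Sum>i | Z$i = 0. w$i *\<^sub>R X$i)"

definition objective_w :: "real \<Rightarrow> real \<Rightarrow> ('n \<Rightarrow> real) \<Rightarrow> ('n \<Rightarrow> real^'n)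
      \<Rightarrow> real^'n \<Rightarrow> real^'n \<Rightarrow> real" where
  "objective_w s2 r2 lam v Z w =
     s2 * (\<Sum>i\<in>UNIV. (w$i)^2) +
     r2 * (\<Sum>k\<in>UNIV. lam k *
        ((\<Sum>i | Z$i = 1. w$i * (v k)$i) - (\<Sum>i | Z$i = 0. w$i * (v k)$i))^2)"

definition gls_weights :: "real^'n^'n \<Rightarrow> real^'p^'n \<Rightarrow> real^'n \<Rightarrow> real^'n" where
  "gls_weights Sg X Z =
     (let Si = matrix_inv Sg;
          A = matrix_inv (transpose X ** Si ** X);
          M = (\<chi> i j. if i = j then 2 * Z$i - 1 else 0) :: real^'n^'n;
          num = (mat 1 - Si ** X ** A ** transpose X) ** Si *v Z;
          den = Z \<bullet> ((Si ** (mat 1 - X ** A ** transpose X ** Si)) *v Z)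
      in (1 / den) *\<^sub>R (M *v num))"

definition design :: "real^'p^'n \<Rightarrow> real^'n \<Rightarrow> real^('p option)^'n" where
  "design X Z = (\<chi> i. \<chi> j. case j of None \<Rightarrow> Z$i | Some c \<Rightarrow> X$i$c)"

definition tau_gls :: "real^'n^'n \<Rightarrow> real^'p^'n \<Rightarrow> real^'n \<Rightarrow> real^'n \<Rightarrow> real" where
  "tau_gls Sg X Z Y =
     (let D = design X Z; Si = matrix_inv Sg
      in (matrix_inv (transpose D ** Si ** D) ** transpose D ** Si *v Y) $ None)"

end

theory Submission
  imports Defs
begin

text \<open>Write \<open>s = M w\<close> for the sign-flipped weights. Since the first covariate is constant,
  the constraints say exactly \<open>Z\<^sup>T s = 1\<close> and \<open>X\<^sup>T s = 0\<close>, and by the spectral decomposition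
  of \<open>S\<close> the objective is the quadratic form \<open>s\<^sup>T \<Sigma> s\<close>. Let \<open>\<gamma>\<close> be the GLS coefficient
  of \<open>Z\<close> on \<open>X\<close> and \<open>s\<^sub>0 = \<Sigma>\<^sup>-\<^sup>1 (Z - X \<gamma>) / Z\<^sup>T \<Sigma>\<^sup>-\<^sup>1 (Z - X \<gamma>)\<close>. Then \<open>s\<^sub>0\<close> satisfies the
  constraints and \<open>\<Sigma> s\<^sub>0\<close> lies in the span of \<open>Z\<close> and the columns of \<open>X\<close>, so every feasible
  direction is \<open>\<Sigma>\<close>-orthogonal to \<open>s\<^sub>0\<close> and \<open>s\<^sub>0\<close> is the unique minimiser. The same
  orthogonality, applied to the residual of the GLS normal equations, gives \<open>\<tau>\<^sub>G\<^sub>L\<^sub>S = s\<^sub>0\<^sup>T Y\<close>.\<close>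

lemma matrix_inv_right:
  fixes A :: "'a::semiring_1^'n^'n"
  assumes "invertible A"
  shows "A ** matrix_inv A = mat 1"
  using someI_ex[OF assms[unfolded invertible_def]] unfolding matrix_inv_def by auto

lemma matrix_inv_left:
  fixes A :: "'a::semiring_1^'n^'n"
  assumes "invertible A"
  shows "matrix_inv A ** A = mat 1"
  using someI_ex[OF assms[unfolded invertible_def]] unfolding matrix_inv_def by auto

lemma invertible_if_kernel_trivial:
  fixes A :: "'a::field^'n^'n"
  assumes "\<And>x. A *v x = 0 \<Longrightarrow> x = 0"
  shows "invertible A"
  using assms matrix_left_invertible_ker[of A] invertible_left_inverse[of A] by blast

lemma inner_matrix_vector_transpose:
  fixes A :: "real^'n^'m"
  shows "x \<bullet> (A *v y) = (transpose A *v x) \<bullet> y"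
  by (simp add: dot_lmul_matrix)

lemma inner_matrix_vector_symmetric:
  fixes A :: "real^'n^'n"
  assumes "transpose A = A"
  shows "x \<bullet> (A *v y) = (A *v x) \<bullet> y"
  using inner_matrix_vector_transpose[of x A y] assms by simp

lemma transpose_matrix_vector_eq_sum:
  fixes X :: "real^'p^'n"
  shows "transpose X *v s = (\<Sum>i\<in>UNIV. s$i *\<^sub>R X$i)"
  by (simp add: vec_eq_iff matrix_vector_mult_def transpose_def sum_component mult.commute
      del: transpose_matrix_vector)

definition positive_definite :: "real^'n^'n \<Rightarrow> bool" where
  "positive_definite A \<longleftrightarrow> (\<forall>x. x \<noteq> 0 \<longrightarrow> 0 < x \<bullet> (A *v x))"

lemma positive_definite_invertible:
  fixes A :: "real^'n^'n"
  assumes "positive_definite A"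
  shows "invertible A"
  using assms unfolding positive_definite_def
  by (intro invertible_if_kernel_trivial) (metis inner_zero_right less_irrefl)

lemma positive_definite_matrix_inv:
  fixes A :: "real^'n^'n"
  assumes "positive_definite A"
  shows "positive_definite (matrix_inv A)"
  unfolding positive_definite_def
proof (intro allI impI)
  fix y :: "real^'n"
  assume "y \<noteq> 0"
  have A_inv: "A *v (matrix_inv A *v y) = y"
    using matrix_inv_right[OF positive_definite_invertible[OF assms]]
    by (simp add: matrix_vector_mul_assoc)
  with \<open>y \<noteq> 0\<close> have "matrix_inv A *v y \<noteq> 0"
    by auto
  then have "0 < (matrix_inv A *v y) \<bullet> (A *v (matrix_inv A *v y))"
    using assms unfolding positive_definite_def by blast
  then show "0 < y \<bullet> (matrix_inv A *v y)"
    by (simp add: A_inv inner_commute)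
qed

lemma positive_definite_congruence:
  fixes P :: "real^'n^'n" and D :: "real^'m^'n"
  assumes "positive_definite P" and "\<And>x. D *v x = 0 \<Longrightarrow> x = 0"
  shows "positive_definite (transpose D ** P ** D)"
  unfolding positive_definite_def
proof (intro allI impI)
  fix x :: "real^'m"
  assume "x \<noteq> 0"
  then have "0 < (D *v x) \<bullet> (P *v (D *v x))"
    using assms unfolding positive_definite_def by blast
  then show "0 < x \<bullet> ((transpose D ** P ** D) *v x)"
    by (simp add: inner_matrix_vector_transpose[of x "transpose D"] matrix_vector_mul_assoc[symmetric]
        del: transpose_matrix_vector)
qed

lemma quadratic_form_add_orthogonal:
  fixes A :: "real^'n^'n"
  assumes "transpose A = A" and "d \<bullet> (A *v s) = 0"
  shows "(s + d) \<bullet> (A *v (s + d)) = s \<bullet> (A *v s) + d \<bullet> (A *v d)"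
proof -
  have "s \<bullet> (A *v d) = 0"
    using assms inner_matrix_vector_symmetric[of A s d] by (simp add: inner_commute)
  then show ?thesis
    using assms(2) by (simp add: matrix_vector_right_distrib inner_add_left inner_add_right)
qed

lemma quadratic_form_orthonormal_eigenbasis:
  fixes A :: "real^'n^'n" and v :: "'n \<Rightarrow> real^'n"
  assumes orthonormal: "\<And>k l. v k \<bullet> v l = (if k = l then 1 else 0)"
    and eigen: "\<And>k. A *v v k = lam k *\<^sub>R v k"
  shows "x \<bullet> (A *v x) = (\<Sum>k\<in>UNIV. lam k * (v k \<bullet> x)\<^sup>2)"
proof -
  define V where "V = (\<chi> k. v k)"
  have "V ** transpose V = mat 1"
    using orthonormal
    by (simp add: vec_eq_iff matrix_matrix_mult_def transpose_def V_def mat_def inner_vec_def)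
  then have "transpose V ** V = mat 1"
    using matrix_left_right_inverse by blast
  then have "x = transpose V *v (V *v x)"
    by (simp add: matrix_vector_mul_assoc)
  also have "V *v x = (\<chi> k. v k \<bullet> x)"
    by (simp add: vec_eq_iff matrix_vector_mult_def V_def inner_vec_def)
  finally have expansion: "x = (\<Sum>k\<in>UNIV. (v k \<bullet> x) *\<^sub>R v k)"
    by (simp add: transpose_matrix_vector_eq_sum V_def del: transpose_matrix_vector)
  have "A *v x = (\<Sum>k\<in>UNIV. (v k \<bullet> x) *\<^sub>R (lam k *\<^sub>R v k))"
    by (subst expansion) (simp add: vec.sum matrix_vector_mult_scaleR eigen)
  then show ?thesis
    by (simp add: inner_sum_right inner_commute power2_eq_square mult_ac)
qed

lemma Sigma_mat_mult_vector: "Sigma_mat s2 r2 S *v y = s2 *\<^sub>R y + r2 *\<^sub>R (S *v y)"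
  by (simp add: Sigma_mat_def matrix_vector_mult_add_rdistrib scaleR_matrix_vector_assoc[symmetric])

lemma transpose_Sigma_mat: "transpose S = S \<Longrightarrow> transpose (Sigma_mat s2 r2 S) = Sigma_mat s2 r2 S"
  unfolding Sigma_mat_def by (simp add: vec_eq_iff transpose_def mat_def)

lemma positive_definite_Sigma_mat:
  fixes S :: "real^'n^'n"
  assumes "s2 > 0" and "r2 \<ge> 0" and "\<And>x. 0 \<le> x \<bullet> (S *v x)"
  shows "positive_definite (Sigma_mat s2 r2 S)"
  unfolding positive_definite_def
proof (intro allI impI)
  fix x :: "real^'n"
  assume "x \<noteq> 0"
  then have "0 < s2 * (x \<bullet> x)"
    using assms(1) by simp
  moreover have "0 \<le> r2 * (x \<bullet> (S *v x))"
    using assms(2,3) by simp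
  ultimately show "0 < x \<bullet> (Sigma_mat s2 r2 S *v x)"
    by (simp add: Sigma_mat_mult_vector inner_add_right)
qed

definition sign_flip :: "real^'n \<Rightarrow> real^'n \<Rightarrow> real^'n" where
  "sign_flip Z w = (\<chi> i. (2 * Z$i - 1) * w$i)"

lemma sign_flip_sign_flip:
  assumes "\<forall>i. Z$i = 0 \<or> Z$i = 1"
  shows "sign_flip Z (sign_flip Z w) = w"
proof -
  have "(2 * Z$i - 1) * ((2 * Z$i - 1) * w$i) = w$i" for i
    using assms by (cases "Z$i = 0") auto
  then show ?thesis
    by (simp add: sign_flip_def vec_eq_iff)
qed

lemma diag_sign_matrix_vector:
  "(\<chi> i j. if i = j then 2 * Z$i - 1 else 0) *v w = sign_flip Z w"
  by (simp add: sign_flip_def vec_eq_iff matrix_vector_mult_def if_distrib[of "\<lambda>x. x * _"]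
      cong: if_cong)

lemma sum_sign_flip:
  fixes g :: "'n::finite \<Rightarrow> 'a::real_vector"
  assumes "\<forall>i. Z$i = 0 \<or> Z$i = 1"
  shows "(\<Sum>i\<in>UNIV. (sign_flip Z w)$i *\<^sub>R g i)
    = (\<Sum>i | Z$i = 1. w$i *\<^sub>R g i) - (\<Sum>i | Z$i = 0. w$i *\<^sub>R g i)"
proof -
  have groups: "UNIV = {i. Z$i = 1} \<union> {i. Z$i = 0}"
    using assms by auto
  have "(\<Sum>i\<in>UNIV. (sign_flip Z w)$i *\<^sub>R g i)
      = (\<Sum>i | Z$i = 1. (sign_flip Z w)$i *\<^sub>R g i) + (\<Sum>i | Z$i = 0. (sign_flip Z w)$i *\<^sub>R g i)"
    by (subst groups, rule sum.union_disjoint) auto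
  also have "(\<Sum>i | Z$i = 1. (sign_flip Z w)$i *\<^sub>R g i) = (\<Sum>i | Z$i = 1. w$i *\<^sub>R g i)"
    by (rule sum.cong) (auto simp: sign_flip_def)
  also have "(\<Sum>i | Z$i = 0. (sign_flip Z w)$i *\<^sub>R g i) = - (\<Sum>i | Z$i = 0. w$i *\<^sub>R g i)"
    by (simp add: sign_flip_def sum_negf[symmetric])
  finally show ?thesis
    by simp
qed

lemma inner_sign_flip:
  assumes "\<forall>i. Z$i = 0 \<or> Z$i = 1"
  shows "sign_flip Z w \<bullet> y = (\<Sum>i | Z$i = 1. w$i * y$i) - (\<Sum>i | Z$i = 0. w$i * y$i)"
  using sum_sign_flip[OF assms, of w "\<lambda>i. y$i"] by (simp add: inner_vec_def)

lemma feasible_w_iff_sign_flip: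
  fixes Z :: "real^'n" and X :: "real^'p^'n"
  assumes Z01: "\<forall>i. Z$i = 0 \<or> Z$i = 1" and ones: "\<forall>i. X$i$j = 1"
  shows "feasible_w Z X w \<longleftrightarrow> Z \<bullet> sign_flip Z w = 1 \<and> transpose X *v sign_flip Z w = 0"
proof -
  have treated_sum: "Z \<bullet> sign_flip Z w = (\<Sum>i | Z$i = 1. w$i)"
    using inner_sign_flip[OF Z01, of w Z] by (simp add: inner_commute)
  have balance: "transpose X *v sign_flip Z w
      = (\<Sum>i | Z$i = 1. w$i *\<^sub>R X$i) - (\<Sum>i | Z$i = 0. w$i *\<^sub>R X$i)"
    unfolding transpose_matrix_vector_eq_sum by (rule sum_sign_flip[OF Z01])
  have constant_covariate: "((\<Sum>i | Z$i = 1. w$i *\<^sub>R X$i) - (\<Sum>i | Z$i = 0. w$i *\<^sub>R X$i))$j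
      = (\<Sum>i | Z$i = 1. w$i) - (\<Sum>i | Z$i = 0. w$i)"
    using ones by (simp add: sum_component)
  show ?thesis
  proof
    assume "feasible_w Z X w"
    then show "Z \<bullet> sign_flip Z w = 1 \<and> transpose X *v sign_flip Z w = 0"
      unfolding feasible_w_def treated_sum balance by simp
  next
    assume "Z \<bullet> sign_flip Z w = 1 \<and> transpose X *v sign_flip Z w = 0"
    then have treated: "(\<Sum>i | Z$i = 1. w$i) = 1"
      and balanced: "(\<Sum>i | Z$i = 1. w$i *\<^sub>R X$i) - (\<Sum>i | Z$i = 0. w$i *\<^sub>R X$i) = 0"
      unfolding treated_sum balance by simp_all
    have "(\<Sum>i | Z$i = 1. w$i) - (\<Sum>i | Z$i = 0. w$i) = 0"
      using constant_covariate unfolding balanced by simp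
    with treated balanced show "feasible_w Z X w"
      unfolding feasible_w_def by simp
  qed
qed

lemma objective_w_sign_flip:
  fixes S :: "real^'n^'n" and v :: "'n \<Rightarrow> real^'n"
  assumes Z01: "\<forall>i. Z$i = 0 \<or> Z$i = 1"
    and orthonormal: "\<And>k l. v k \<bullet> v l = (if k = l then 1 else 0)"
    and eigen: "\<And>k. S *v v k = lam k *\<^sub>R v k"
  shows "objective_w s2 r2 lam v Z w = sign_flip Z w \<bullet> (Sigma_mat s2 r2 S *v sign_flip Z w)"
proof -
  have "(2 * Z$i - 1) * w$i * ((2 * Z$i - 1) * w$i) = (w$i)\<^sup>2" for i
    using Z01 by (cases "Z$i = 0") (auto simp: power2_eq_square)
  then have norm: "(\<Sum>i\<in>UNIV. (w$i)\<^sup>2) = sign_flip Z w \<bullet> sign_flip Z w"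
    by (simp add: inner_vec_def sign_flip_def)
  have "(\<Sum>i | Z$i = 1. w$i * (v k)$i) - (\<Sum>i | Z$i = 0. w$i * (v k)$i) = v k \<bullet> sign_flip Z w"
    for k using inner_sign_flip[OF Z01, of w "v k"] by (simp add: inner_commute)
  then show ?thesis
    unfolding objective_w_def norm
    using quadratic_form_orthonormal_eigenbasis[OF orthonormal eigen, of "sign_flip Z w"]
    by (simp add: Sigma_mat_mult_vector inner_add_right)
qed

lemma gls_normal_equations:
  fixes D :: "real^'m^'n" and P :: "real^'n^'n" and Y :: "real^'n"
  assumes "invertible (transpose D ** P ** D)"
  defines "q \<equiv> (matrix_inv (transpose D ** P ** D) ** transpose D ** P) *v Y"
  shows "transpose D *v (P *v (Y - D *v q)) = 0"
proof -
  have "(transpose D ** P ** D) *v q = transpose D *v (P *v Y)"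
    unfolding q_def using matrix_inv_right[OF assms(1)]
    by (simp add: matrix_vector_mul_assoc matrix_mul_assoc del: transpose_matrix_vector)
  then show ?thesis
    by (simp add: matrix_vector_mult_diff_distrib matrix_vector_mul_assoc matrix_mul_assoc
        del: transpose_matrix_vector)
qed

lemma design_mult_vector:
  "design X Z *v q = X *v (\<chi> c. q$Some c) + q$None *\<^sub>R Z"
  by (simp add: vec_eq_iff matrix_vector_mult_def design_def UNIV_option_conv sum.reindex
      mult.commute)

lemma transpose_design_mult_vector:
  "transpose (design X Z) *v y
    = (\<chi> j. case j of None \<Rightarrow> Z \<bullet> y | Some c \<Rightarrow> (transpose X *v y)$c)"
  by (simp add: vec_eq_iff matrix_vector_mult_def design_def transpose_def inner_vec_def
      mult.commute split: option.split del: transpose_matrix_vector)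

locale gls_model =
  fixes Sg :: "real^'n^'n" and X :: "real^'p^'n" and Z :: "real^'n"
  assumes symmetric: "transpose Sg = Sg"
    and pos_def: "positive_definite Sg"
    and invertible_gram: "invertible (transpose X ** matrix_inv Sg ** X)"
    and denominator_nonzero: "Z \<bullet> ((matrix_inv Sg **
        (mat 1 - X ** matrix_inv (transpose X ** matrix_inv Sg ** X) ** transpose X ** matrix_inv Sg))
          *v Z) \<noteq> 0"
begin

definition gamma :: "real^'p" where
  "gamma = matrix_inv (transpose X ** matrix_inv Sg ** X) *v (transpose X *v (matrix_inv Sg *v Z))"

definition resid :: "real^'n" where
  "resid = matrix_inv Sg *v (Z - X *v gamma)"

definition gls_contrast :: "real^'n" where
  "gls_contrast = (1 / (Z \<bullet> resid)) *\<^sub>R resid"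

lemma mult_matrix_inv_vector: "Sg *v (matrix_inv Sg *v y) = y"
  using matrix_inv_right[OF positive_definite_invertible[OF pos_def]]
  by (simp add: matrix_vector_mul_assoc)

lemma gram_mult_vector:
  "(transpose X ** matrix_inv Sg ** X) *v y = transpose X *v (matrix_inv Sg *v (X *v y))"
  by (simp only: matrix_vector_mul_assoc matrix_mul_assoc)

lemma gram_cancel: "matrix_inv (transpose X ** matrix_inv Sg ** X) *v
    ((transpose X ** matrix_inv Sg ** X) *v y) = y"
  using matrix_inv_left[OF invertible_gram] by (simp add: matrix_vector_mul_assoc)

lemma gram_mult_gamma: "(transpose X ** matrix_inv Sg ** X) *v gamma = transpose X *v (matrix_inv Sg *v Z)"
  unfolding gamma_def matrix_vector_mul_assoc[of "transpose X ** matrix_inv Sg ** X"]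
  by (simp add: matrix_inv_right[OF invertible_gram] del: transpose_matrix_vector)

lemma transpose_X_resid: "transpose X *v resid = 0"
proof -
  have "transpose X *v resid
      = transpose X *v (matrix_inv Sg *v Z) - (transpose X ** matrix_inv Sg ** X) *v gamma"
    unfolding resid_def gram_mult_vector by (simp only: matrix_vector_mult_diff_distrib)
  then show ?thesis
    by (simp only: gram_mult_gamma diff_self)
qed

lemma mult_resid: "Sg *v resid = Z - X *v gamma"
  by (simp add: resid_def mult_matrix_inv_vector)

lemma numerator_eq_resid:
  "((mat 1 - matrix_inv Sg ** X ** matrix_inv (transpose X ** matrix_inv Sg ** X) ** transpose X)
      ** matrix_inv Sg) *v Z = resid"
  by (simp add: resid_def gamma_def matrix_vector_mul_assoc[symmetric]
      matrix_vector_mult_diff_rdistrib vec.diff del: transpose_matrix_vector)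

lemma denominator_eq_resid:
  "(matrix_inv Sg ** (mat 1 - X ** matrix_inv (transpose X ** matrix_inv Sg ** X)
      ** transpose X ** matrix_inv Sg)) *v Z = resid"
  by (simp add: resid_def gamma_def matrix_vector_mul_assoc[symmetric]
      matrix_vector_mult_diff_rdistrib vec.diff del: transpose_matrix_vector)

lemma Z_inner_resid_nonzero: "Z \<bullet> resid \<noteq> 0"
  using denominator_nonzero unfolding denominator_eq_resid .

lemma gls_contrast_constraints:
  "Z \<bullet> gls_contrast = 1" "transpose X *v gls_contrast = 0"
  using Z_inner_resid_nonzero transpose_X_resid
  by (simp_all add: gls_contrast_def matrix_vector_mult_scaleR del: transpose_matrix_vector)

lemma gls_contrast_minimal:
  assumes "Z \<bullet> s = 1" and "transpose X *v s = 0" and "s \<noteq> gls_contrast"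
  shows "gls_contrast \<bullet> (Sg *v gls_contrast) < s \<bullet> (Sg *v s)"
proof -
  define d where "d = s - gls_contrast"
  have "d \<noteq> 0"
    using assms(3) by (simp add: d_def)
  have Z_d: "Z \<bullet> d = 0" and X_d: "transpose X *v d = 0"
    using assms(1,2) gls_contrast_constraints
    by (simp_all add: d_def inner_diff_right vec.diff del: transpose_matrix_vector)
  have "d \<bullet> (X *v gamma) = 0"
    using X_d inner_matrix_vector_transpose[of d X gamma] by simp
  then have "d \<bullet> (Sg *v gls_contrast) = 0"
    using Z_d
    by (simp add: gls_contrast_def matrix_vector_mult_scaleR mult_resid inner_diff_right inner_commute)
  then have "s \<bullet> (Sg *v s) = gls_contrast \<bullet> (Sg *v gls_contrast) + d \<bullet> (Sg *v d)"
    using quadratic_form_add_orthogonal[OF symmetric] by (metis d_def add.commute diff_add_cancel)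
  moreover have "0 < d \<bullet> (Sg *v d)"
    using pos_def \<open>d \<noteq> 0\<close> unfolding positive_definite_def by blast
  ultimately show ?thesis
    by simp
qed

lemma gls_weights_eq_sign_flip: "gls_weights Sg X Z = sign_flip Z gls_contrast"
  unfolding gls_weights_def Let_def numerator_eq_resid denominator_eq_resid diag_sign_matrix_vector
  by (simp add: gls_contrast_def sign_flip_def vec_eq_iff)

lemma design_kernel_trivial:
  assumes "design X Z *v q = 0"
  shows "q = 0"
proof -
  define \<beta> where "\<beta> = (\<chi> c. q$Some c)"
  define t where "t = q$None"
  have combination: "X *v \<beta> + t *\<^sub>R Z = 0"
    using assms by (simp add: design_mult_vector \<beta>_def t_def)
  have "(X *v \<beta>) \<bullet> resid = 0"
    using transpose_X_resid inner_matrix_vector_transpose[of resid X \<beta>] by (simp add: inner_commute)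
  then have "t * (Z \<bullet> resid) = (X *v \<beta> + t *\<^sub>R Z) \<bullet> resid"
    by (simp add: inner_add_left)
  then have "t = 0"
    using combination Z_inner_resid_nonzero by simp
  then have "(transpose X ** matrix_inv Sg ** X) *v \<beta> = 0"
    using combination by (simp add: gram_mult_vector del: transpose_matrix_vector)
  then have "\<beta> = 0"
    using gram_cancel[of \<beta>] by simp
  show "q = 0"
    unfolding vec_eq_iff
  proof
    fix j
    show "q$j = 0$j"
      using \<open>t = 0\<close> \<open>\<beta> = 0\<close> by (cases j) (simp_all add: t_def \<beta>_def vec_eq_iff)
  qed
qed

text \<open>If \<open>q\<close> solves the normal equations of the regression of \<open>Y\<close> on \<open>(X Z)\<close>, then
  \<open>Y - (X Z) q = \<Sigma> r\<close> with \<open>r\<close> orthogonal to \<open>Z\<close> and to the columns of \<open>X\<close>; since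
  \<open>\<Sigma> resid = Z - X gamma\<close>, pairing with \<open>resid\<close> isolates the last coordinate of \<open>q\<close>.\<close>

lemma tau_gls_eq_gls_contrast: "tau_gls Sg X Z Y = gls_contrast \<bullet> Y"
proof -
  define D where "D = design X Z"
  define B where "B = transpose D ** matrix_inv Sg ** D"
  define q where "q = (matrix_inv B ** transpose D ** matrix_inv Sg) *v Y"
  define r where "r = matrix_inv Sg *v (Y - D *v q)"
  have "invertible B"
    unfolding B_def D_def
    by (intro positive_definite_invertible positive_definite_congruence
        positive_definite_matrix_inv pos_def design_kernel_trivial)
  then have "transpose D *v r = 0"
    unfolding r_def q_def B_def by (rule gls_normal_equations)
  then have Z_r: "Z \<bullet> r = 0" and X_r: "transpose X *v r = 0"
    unfolding D_def transpose_design_mult_vector by (auto simp: vec_eq_iff split: option.splits)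
  have "(X *v gamma) \<bullet> r = 0"
    using X_r inner_matrix_vector_transpose[of r X gamma] by (simp add: inner_commute)
  then have resid_r: "resid \<bullet> (Sg *v r) = 0"
    using inner_matrix_vector_symmetric[OF symmetric, of resid r] Z_r
    by (simp add: mult_resid inner_diff_left)
  have "resid \<bullet> (X *v (\<chi> c. q$Some c)) = 0"
    using transpose_X_resid inner_matrix_vector_transpose[of resid X]
    by (simp del: transpose_matrix_vector)
  then have resid_Dq: "resid \<bullet> (D *v q) = q$None * (Z \<bullet> resid)"
    by (simp add: D_def design_mult_vector inner_add_right inner_commute)
  have "Y = D *v q + Sg *v r"
    by (simp add: r_def mult_matrix_inv_vector)
  then have "resid \<bullet> Y = q$None * (Z \<bullet> resid)"
    using resid_r resid_Dq by (metis add.right_neutral inner_add_right)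
  moreover have "tau_gls Sg X Z Y = q$None"
    by (simp add: tau_gls_def Let_def D_def B_def q_def)
  ultimately show ?thesis
    using Z_inner_resid_nonzero by (simp add: gls_contrast_def)
qed

end

theorem proposition2:
  fixes Z :: "real^('n::{finite,wellorder})"
    and X :: "real^('p::{finite,wellorder})^('n::{finite,wellorder})"
    and sigma2 rho2 :: real
    and S :: "real^('n::{finite,wellorder})^('n::{finite,wellorder})"
    and v :: "('n::{finite,wellorder}) \<Rightarrow> real^('n::{finite,wellorder})"
    and lam :: "('n::{finite,wellorder}) \<Rightarrow> real"
  assumes Z01: "\<forall>i. Z$i = 0 \<or> Z$i = 1"
    and treated: "\<exists>i. Z$i = 1" and control: "\<exists>i. Z$i = 0"
    and ones: "\<forall>i. X$i$(LEAST j. True) = 1"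
    and sigma_pos: "sigma2 > 0" and rho_nonneg: "rho2 \<ge> 0"
    and S_sym: "transpose S = S"
    and S_psd: "\<forall>x. 0 \<le> x \<bullet> (S *v x)"
    and orthonormal: "\<forall>k l. v k \<bullet> v l = (if k = l then 1 else 0)"
    and eigen: "\<forall>k. S *v v k = lam k *\<^sub>R v k"
    and lam_sorted: "\<forall>k l. k \<le> l \<longrightarrow> lam l \<le> lam k"
    and lam_nonneg: "\<forall>k. lam k \<ge> 0"
    and XSX_inv: "invertible (transpose X ** matrix_inv (Sigma_mat sigma2 rho2 S) ** X)"
    and den_nz: "Z \<bullet> ((matrix_inv (Sigma_mat sigma2 rho2 S) **
        (mat 1 - X ** matrix_inv (transpose X ** matrix_inv (Sigma_mat sigma2 rho2 S) ** X)
          ** transpose X ** matrix_inv (Sigma_mat sigma2 rho2 S))) *v Z) \<noteq> 0"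
  shows "feasible_w Z X (gls_weights (Sigma_mat sigma2 rho2 S) X Z)
    \<and> (\<forall>w. feasible_w Z X w \<and> w \<noteq> gls_weights (Sigma_mat sigma2 rho2 S) X Z \<longrightarrow>
          objective_w sigma2 rho2 lam v Z (gls_weights (Sigma_mat sigma2 rho2 S) X Z)
            < objective_w sigma2 rho2 lam v Z w)
    \<and> (\<forall>Y. tau_gls (Sigma_mat sigma2 rho2 S) X Z Y =
          (\<Sum>i | Z$i = 1. (gls_weights (Sigma_mat sigma2 rho2 S) X Z)$i * Y$i)
          - (\<Sum>i | Z$i = 0. (gls_weights (Sigma_mat sigma2 rho2 S) X Z)$i * Y$i))"
proof -
  \<comment> \<open>\<open>treated\<close> and \<open>control\<close> follow from \<open>den_nz\<close> via feasibility.\<close>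
  interpret gls: gls_model "Sigma_mat sigma2 rho2 S" X Z
    using S_sym sigma_pos rho_nonneg S_psd XSX_inv den_nz
    by unfold_locales (simp_all add: transpose_Sigma_mat positive_definite_Sigma_mat)
  let ?W = "gls_weights (Sigma_mat sigma2 rho2 S) X Z"
  have contrast_W: "sign_flip Z ?W = gls.gls_contrast"
    using gls.gls_weights_eq_sign_flip sign_flip_sign_flip[OF Z01] by simp
  have feasible: "feasible_w Z X w \<longleftrightarrow> Z \<bullet> sign_flip Z w = 1 \<and> transpose X *v sign_flip Z w = 0"
    for w using feasible_w_iff_sign_flip[OF Z01] ones by blast
  have objective: "objective_w sigma2 rho2 lam v Z w
      = sign_flip Z w \<bullet> (Sigma_mat sigma2 rho2 S *v sign_flip Z w)" for w
    using objective_w_sign_flip[OF Z01] orthonormal eigen by blast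
  have "feasible_w Z X ?W"
    unfolding feasible contrast_W using gls.gls_contrast_constraints by simp
  moreover have "objective_w sigma2 rho2 lam v Z ?W < objective_w sigma2 rho2 lam v Z w"
    if "feasible_w Z X w" and "w \<noteq> ?W" for w
  proof -
    have "sign_flip Z w \<noteq> gls.gls_contrast"
      using that(2) contrast_W sign_flip_sign_flip[OF Z01] by metis
    then show ?thesis
      using gls.gls_contrast_minimal that(1) unfolding objective contrast_W feasible by blast
  qed
  moreover have "tau_gls (Sigma_mat sigma2 rho2 S) X Z Y
      = (\<Sum>i | Z$i = 1. ?W$i * Y$i) - (\<Sum>i | Z$i = 0. ?W$i * Y$i)" for Y
    using gls.tau_gls_eq_gls_contrast inner_sign_flip[OF Z01, of ?W Y] by (simp add: contrast_W)
  ultimately show ?thesis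
    by blast
qed

end
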